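(* Fix $R\in(0,1)$ and, when $\Delta_S^B\ne0$, let $\tilde i=\Delta_O^B/\Delta_S^B$. Let $\mathbb E[\cdot]$ denote expectation with respect to $i\sim F$. The value $V(R)$ of the recommendation system equals: (i) $\pi^B\big[\Delta_O^B-\Delta_S^B\,\mathbb E[i]\big]$ if $|\Delta_S^B|\le 2\Delta_O^B$; (ii) $(1-\pi^B)F(\tilde i)\big[\Delta_O^D-\Delta_S^D\,\mathbb E[i\mid i\le\tilde i]\big]+\pi^B(1-F(\tilde i))\big[\Delta_O^B-\Delta_S^B\,\mathbb E[i\mid i\ge\tilde i]\big]$ if $\Delta_S^B<-2\Delta_O^B$; (iii) $\pi^BF(\tilde i)\big[\Delta_O^B-\Delta_S^B\,\mathbb E[i\mid i\le\tilde i]\big]+(1-\pi^B)(1-F(\tilde i))\big[\Delta_O^D-\Delta_S^D\,\mathbb E[i\mid i\ge\tilde i]\big]$ if $\Delta_S^B>2\Delta_O^B$.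
   Context: Setting. Consumer types are $i\in[-1/2,1/2]$, distributed according to a continuous cumulative distribution function $F$ with full support on $[-1/2,1/2]$. A product has a quality vector $(Q_1,Q_2)\in\{0,1\}^2$; a type-$i$ consumer gets payoff $(1/2+i)Q_1+(1/2-i)Q_2$ from it. The versions $(1,1),(1,0),(0,1),(0,0)$ have prior probabilities $q_H,q_1,q_2,q_L$ respectively, all strictly positive and summing to $1$. One product carries a recommendation from a sender whose type is drawn from $F$ independently of the product; given a threshold $R\in(0,1)$, the sender gives a buy recommendation $B$ if her payoff from the product is at least $R$ and a don't-buy recommendation $D$ otherwise. Let $\phi_1(R)=1-F(R-1/2)$, $\phi_2(R)=F(1/2-R)$, $\pi^B=q_H+q_1\phi_1(R)+q_2\phi_2(R)$ and $\pi^D=1-\pi^B$. Posteriors: $p^B_H=q_H/\pi^B$, $p^B_1=q_1\phi_1(R)/\pi^B$, $p^B_2=q_2\phi_2(R)/\pi^B$, $p^B_L=0$; $p^D_H=0$, $p^D_1=q_1(1-\phi_1(R))/\pi^D$, $p^D_2=q_2(1-\phi_2(R))/\pi^D$, $p^D_L=q_L/\pi^D$. For $r\in\{B,D\}$ let $U_i^r=p_H^r+(1/2+i)p_1^r+(1/2-i)p_2^r$ and $U_i^0=q_H+(1/2+i)q_1+(1/2-i)q_2$. The objective and subjective effects of $r\in\{B,D\}$ are $\Delta_O^r=p_H^r-q_H+\frac{p_1^r-q_1}{2}+\frac{p_2^r-q_2}{2}$ and $\Delta_S^r=(p_2^r-q_2)-(p_1^r-q_1)$. The value of the recommendation system is the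 expected payoff gain of a receiver drawn from $F$ (independently of the sender) who, after observing the recommendation, optimally chooses between the recommended product and an unrecommended alternative: $V(R)=\pi^B\int_{-1/2}^{1/2}\max\{U_i^B-U_i^0,0\}\,dF(i)+\pi^D\int_{-1/2}^{1/2}\max\{U_i^D-U_i^0,0\}\,dF(i)$. *)

theory Defs
  imports "HOL-Probability.Probability"
begin

text \<open>Consumer types i are distributed according to the probability measure M on the reals,
  with cumulative distribution function F = cdf M.  Priors qH q1 q2 qL of versions
  (1,1),(1,0),(0,1),(0,0); recommendation threshold R.\<close>

datatype recm = Buy | DontBuy

definition phi1 :: "(real \<Rightarrow> real) \<Rightarrow> real \<Rightarrow> real" where
  "phi1 F R = 1 - F (R - 1/2)"

definition phi2 :: "(real \<Rightarrow> real) \<Rightarrow> real \<Rightarrow> real" where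
  "phi2 F R = F (1/2 - R)"

definition piB :: "(real \<Rightarrow> real) \<Rightarrow> real \<Rightarrow> real \<Rightarrow> real \<Rightarrow> real \<Rightarrow> real" where
  "piB F qH q1 q2 R = qH + q1 * phi1 F R + q2 * phi2 F R"

definition piD :: "(real \<Rightarrow> real) \<Rightarrow> real \<Rightarrow> real \<Rightarrow> real \<Rightarrow> real \<Rightarrow> real" where
  "piD F qH q1 q2 R = 1 - piB F qH q1 q2 R"

definition postH :: "(real \<Rightarrow> real) \<Rightarrow> real \<Rightarrow> real \<Rightarrow> real \<Rightarrow> real \<Rightarrow> real \<Rightarrow> recm \<Rightarrow> real" where
  "postH F qH q1 q2 qL R r =
     (case r of Buy \<Rightarrow> qH / piB F qH q1 q2 R | DontBuy \<Rightarrow> 0)"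

definition post1 :: "(real \<Rightarrow> real) \<Rightarrow> real \<Rightarrow> real \<Rightarrow> real \<Rightarrow> real \<Rightarrow> real \<Rightarrow> recm \<Rightarrow> real" where
  "post1 F qH q1 q2 qL R r =
     (case r of Buy \<Rightarrow> q1 * phi1 F R / piB F qH q1 q2 R
      | DontBuy \<Rightarrow> q1 * (1 - phi1 F R) / piD F qH q1 q2 R)"

definition post2 :: "(real \<Rightarrow> real) \<Rightarrow> real \<Rightarrow> real \<Rightarrow> real \<Rightarrow> real \<Rightarrow> real \<Rightarrow> recm \<Rightarrow> real" where
  "post2 F qH q1 q2 qL R r =
     (case r of Buy \<Rightarrow> q2 * phi2 F R / piB F qH q1 q2 R
      | DontBuy \<Rightarrow> q2 * (1 - phi2 F R) / piD F qH q1 q2 R)"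

definition postL :: "(real \<Rightarrow> real) \<Rightarrow> real \<Rightarrow> real \<Rightarrow> real \<Rightarrow> real \<Rightarrow> real \<Rightarrow> recm \<Rightarrow> real" where
  "postL F qH q1 q2 qL R r =
     (case r of Buy \<Rightarrow> 0 | DontBuy \<Rightarrow> qL / piD F qH q1 q2 R)"

definition Urec :: "(real \<Rightarrow> real) \<Rightarrow> real \<Rightarrow> real \<Rightarrow> real \<Rightarrow> real \<Rightarrow> real \<Rightarrow> recm \<Rightarrow> real \<Rightarrow> real" where
  "Urec F qH q1 q2 qL R r i =
     postH F qH q1 q2 qL R r + (1/2 + i) * post1 F qH q1 q2 qL R r
       + (1/2 - i) * post2 F qH q1 q2 qL R r"

definition U0 :: "real \<Rightarrow> real \<Rightarrow> real \<Rightarrow> real \<Rightarrow> real" where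
  "U0 qH q1 q2 i = qH + (1/2 + i) * q1 + (1/2 - i) * q2"

definition DeltaO :: "(real \<Rightarrow> real) \<Rightarrow> real \<Rightarrow> real \<Rightarrow> real \<Rightarrow> real \<Rightarrow> real \<Rightarrow> recm \<Rightarrow> real" where
  "DeltaO F qH q1 q2 qL R r =
     postH F qH q1 q2 qL R r - qH + (post1 F qH q1 q2 qL R r - q1) / 2
       + (post2 F qH q1 q2 qL R r - q2) / 2"

definition DeltaS :: "(real \<Rightarrow> real) \<Rightarrow> real \<Rightarrow> real \<Rightarrow> real \<Rightarrow> real \<Rightarrow> real \<Rightarrow> recm \<Rightarrow> real" where
  "DeltaS F qH q1 q2 qL R r =
     (post2 F qH q1 q2 qL R r - q2) - (post1 F qH q1 q2 qL R r - q1)"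

definition Vrec :: "real measure \<Rightarrow> real \<Rightarrow> real \<Rightarrow> real \<Rightarrow> real \<Rightarrow> real \<Rightarrow> real" where
  "Vrec M qH q1 q2 qL R =
     piB (cdf M) qH q1 q2 R *
       (\<integral>i. max (Urec (cdf M) qH q1 q2 qL R Buy i - U0 qH q1 q2 i) 0 \<partial>M)
   + piD (cdf M) qH q1 q2 R *
       (\<integral>i. max (Urec (cdf M) qH q1 q2 qL R DontBuy i - U0 qH q1 q2 i) 0 \<partial>M)"

definition Ei :: "real measure \<Rightarrow> real" where
  "Ei M = (\<integral>i. i \<partial>M)"

definition Ei_le :: "real measure \<Rightarrow> real \<Rightarrow> real" where
  "Ei_le M t = (\<integral>i\<in>{..t}. i \<partial>M) / measure M {..t}"

definition Ei_ge :: "real measure \<Rightarrow> real \<Rightarrow> real" where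
  "Ei_ge M t = (\<integral>i\<in>{t..}. i \<partial>M) / measure M {t..}"

end

theory Submission
  imports Defs
begin

(* The gain of type i from buying the recommended product instead of the alternative is
   affine in i: U_i^r - U_i^0 = Delta_O^r - i Delta_S^r.  Posteriors average to the prior, so
   pi^B Delta^B + pi^D Delta^D = 0 for both effects: the gain after D is a negative multiple
   of the gain after B, and each type profits from at most one of the two recommendations.
   The probability of B is 1 for (1,1), 0 for (0,0) and in between otherwise, so B raises the
   expected average quality: Delta_O^B >= 0.  If |Delta_S^B| <= 2 Delta_O^B the gain after B is
   nonnegative on the whole support [-1/2,1/2]; otherwise it changes sign at the indifferent
   type and the value splits into integrals over the two half-lines it bounds. *)

lemma mult_le_if_abs_le_half:
  fixes x d c :: real
  assumes "\<bar>x\<bar> \<le> 1/2" "\<bar>d\<bar> \<le> 2 * c"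
  shows "x * d \<le> c"
proof -
  have "\<bar>x * d\<bar> \<le> 1/2 * \<bar>d\<bar>"
    unfolding abs_mult using assms(1) by (rule mult_right_mono) simp
  then show ?thesis using assms(2) by linarith
qed

lemma Urec_minus_U0:
  "Urec F qH q1 q2 qL R r i - U0 qH q1 q2 i
     = DeltaO F qH q1 q2 qL R r - i * DeltaS F qH q1 q2 qL R r"
  unfolding Urec_def U0_def DeltaO_def DeltaS_def by (simp add: field_simps)

lemma piB_pos:
  assumes "\<And>x. 0 \<le> F x" "\<And>x. F x \<le> 1" and "qH > 0" "q1 \<ge> 0" "q2 \<ge> 0"
  shows "piB F qH q1 q2 R > 0"
  unfolding piB_def phi1_def phi2_def using assms
  by (intro add_pos_nonneg mult_nonneg_nonneg) (auto simp: diff_ge_0_iff_ge)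

lemma piB_less_1:
  assumes "\<And>x. 0 \<le> F x" "\<And>x. F x \<le> 1" and "q1 \<ge> 0" "q2 \<ge> 0" "qL > 0"
    and "qH + q1 + q2 + qL = 1"
  shows "piB F qH q1 q2 R < 1"
proof -
  have "q1 * phi1 F R \<le> q1" "q2 * phi2 F R \<le> q2"
    unfolding phi1_def phi2_def using assms by (auto intro: mult_left_le)
  then show ?thesis unfolding piB_def using assms by linarith
qed

lemma piB_mult_DeltaO_Buy:
  assumes "piB F qH q1 q2 R \<noteq> 0"
  shows "piB F qH q1 q2 R * DeltaO F qH q1 q2 qL R Buy
       = qH + (q1 * phi1 F R + q2 * phi2 F R) / 2 - piB F qH q1 q2 R * (qH + (q1 + q2) / 2)"
  using assms unfolding DeltaO_def postH_def post1_def post2_def by (simp add: field_simps)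

lemma piD_mult_DeltaO_DontBuy:
  assumes "piD F qH q1 q2 R \<noteq> 0"
  shows "piD F qH q1 q2 R * DeltaO F qH q1 q2 qL R DontBuy
       = (q1 * (1 - phi1 F R) + q2 * (1 - phi2 F R)) / 2 - piD F qH q1 q2 R * (qH + (q1 + q2) / 2)"
  using assms unfolding DeltaO_def postH_def post1_def post2_def by (simp add: field_simps)

lemma piB_mult_DeltaS_Buy:
  assumes "piB F qH q1 q2 R \<noteq> 0"
  shows "piB F qH q1 q2 R * DeltaS F qH q1 q2 qL R Buy
       = q2 * phi2 F R - q1 * phi1 F R - piB F qH q1 q2 R * (q2 - q1)"
  using assms unfolding DeltaS_def post1_def post2_def by (simp add: field_simps)

lemma piD_mult_DeltaS_DontBuy:
  assumes "piD F qH q1 q2 R \<noteq> 0"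
  shows "piD F qH q1 q2 R * DeltaS F qH q1 q2 qL R DontBuy
       = q2 * (1 - phi2 F R) - q1 * (1 - phi1 F R) - piD F qH q1 q2 R * (q2 - q1)"
  using assms unfolding DeltaS_def post1_def post2_def by (simp add: field_simps)

lemma DeltaO_average_zero:
  assumes "piB F qH q1 q2 R \<noteq> 0" "piD F qH q1 q2 R \<noteq> 0"
  shows "piB F qH q1 q2 R * DeltaO F qH q1 q2 qL R Buy
       + piD F qH q1 q2 R * DeltaO F qH q1 q2 qL R DontBuy = 0"
  unfolding piB_mult_DeltaO_Buy[OF assms(1)] piD_mult_DeltaO_DontBuy[OF assms(2)]
  by (simp add: piD_def field_simps)

lemma DeltaS_average_zero:
  assumes "piB F qH q1 q2 R \<noteq> 0" "piD F qH q1 q2 R \<noteq> 0"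
  shows "piB F qH q1 q2 R * DeltaS F qH q1 q2 qL R Buy
       + piD F qH q1 q2 R * DeltaS F qH q1 q2 qL R DontBuy = 0"
  unfolding piB_mult_DeltaS_Buy[OF assms(1)] piD_mult_DeltaS_DontBuy[OF assms(2)]
  by (simp add: piD_def field_simps)

lemma DeltaO_Buy_nonneg:
  assumes "\<And>x. 0 \<le> F x" "\<And>x. F x \<le> 1"
    and "qH > 0" "q1 > 0" "q2 > 0" "qL > 0" "qH + q1 + q2 + qL = 1"
  shows "DeltaO F qH q1 q2 qL R Buy \<ge> 0"
proof -
  define s where "s = q1 * phi1 F R + q2 * phi2 F R"
  define t where "t = (q1 + q2) / 2"
  have pB: "piB F qH q1 q2 R = qH + s" "piB F qH q1 q2 R > 0" "piB F qH q1 q2 R \<noteq> 0"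
    using piB_pos[of F qH q1 q2 R] assms unfolding piB_def s_def by auto
  have "q1 * phi1 F R \<le> q1" "q2 * phi2 F R \<le> q2" "0 \<le> q1 * phi1 F R" "0 \<le> q2 * phi2 F R"
    unfolding phi1_def phi2_def using assms by (auto intro: mult_left_le)
  then have s: "0 \<le> s" "s \<le> 2 * t" unfolding s_def t_def by auto
  have t: "t > 0" "qL = 1 - qH - 2 * t" using assms unfolding t_def by (simp_all add: field_simps)
  have "2 * t * (piB F qH q1 q2 R * DeltaO F qH q1 q2 qL R Buy)
      = 2 * t * (qH + s / 2 - (qH + s) * (qH + t))"
    unfolding piB_mult_DeltaO_Buy[OF pB(3)] by (simp add: pB(1) s_def t_def)
  also have "\<dots> = (2 * t - s) * qH * (qL + t) + s * (qH + t) * qL"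
    unfolding t(2) by (simp add: algebra_simps)
  also have "\<dots> \<ge> 0"
    using s t assms by (intro add_nonneg_nonneg mult_nonneg_nonneg) auto
  finally show ?thesis
    using pB t by (simp add: zero_le_mult_iff)
qed

lemma (in real_distribution) AE_Ioc_of_cdf:
  assumes "cdf M a = 0" "cdf M b = 1"
  shows "AE x in M. x \<in> {a<..b}"
proof (rule AE_prob_1)
  have "a < b"
    using cdf_nondecreasing[of b a] assms by (cases "a < b") auto
  then show "prob {a<..b} = 1"
    using cdf_diff_eq[of a b] assms by simp
qed

lemma (in real_distribution) integrable_ident_of_cdf:
  assumes "cdf M a = 0" "cdf M b = 1"
  shows "integrable M (\<lambda>x. x)"
  using AE_Ioc_of_cdf[OF assms]
  by (intro integrable_const_bound[where B = "max \<bar>a\<bar> \<bar>b\<bar>"]) (auto elim!: AE_mp)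

lemma (in real_distribution) measure_atLeast_cdf:
  assumes "isCont (cdf M) t"
  shows "measure M {t..} = 1 - cdf M t"
proof -
  have "measure M {t..} = measure M {t} + measure M {t<..}"
    by (subst finite_measure_Union[symmetric]) (auto intro!: arg_cong[where f = "measure M"])
  also have "measure M {t} = 0"
    using assms isCont_cdf by simp
  also have "measure M {t<..} = 1 - cdf M t"
    using prob_compl[of "{..t}"] by (simp add: cdf_def2 Compl_eq_Diff_UNIV[symmetric])
  finally show ?thesis by simp
qed

(* If A is a null set both sides vanish, because x / 0 = 0 makes the conditional mean 0. *)
lemma (in real_distribution) integral_indicator_affine:
  assumes int: "integrable M (\<lambda>i. i)" and A: "A \<in> sets borel"
  shows "(\<integral>i. indicator A i * (c - i * d) \<partial>M)
       = measure M A * (c - d * ((\<integral>i\<in>A. i \<partial>M) / measure M A))"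
proof -
  have int_A: "integrable M (\<lambda>i. d * (indicator A i * i))"
    using integrable_mult_indicator[OF _ int, of A] A by simp
  have int_c: "integrable M (\<lambda>i. c * indicator A i)"
    using A by (intro integrable_mult_right integrable_real_indicator) (auto simp: less_top[symmetric])
  have "(\<integral>i. indicator A i * (c - i * d) \<partial>M)
      = (\<integral>i. c * indicator A i - d * (indicator A i * i) \<partial>M)"
    by (simp add: algebra_simps)
  also have "\<dots> = c * measure M A - d * (\<integral>i\<in>A. i \<partial>M)"
    using A by (simp add: Bochner_Integration.integral_diff[OF int_c int_A] set_lebesgue_integral_def)
  also have "(\<integral>i\<in>A. i \<partial>M) = measure M A * ((\<integral>i\<in>A. i \<partial>M) / measure M A)"
  proof (cases "measure M A = 0")
    case True
    then have "A \<in> null_sets M"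
      using A by (intro null_setsI) (simp_all add: emeasure_eq_measure)
    then have "(\<integral>i\<in>A. i \<partial>M) = (\<integral>i. 0 \<partial>M)"
      unfolding set_lebesgue_integral_def
      by (intro integral_cong_AE) (auto elim!: AE_mp[OF AE_not_in])
    then show ?thesis by simp
  qed simp
  finally show ?thesis by (simp only: right_diff_distrib mult.left_commute mult.commute)
qed

lemma (in real_distribution) integral_max_affine_of_AE_nonneg:
  assumes int: "integrable M (\<lambda>i. i)" and nonneg: "AE i in M. i * d \<le> c"
  shows "(\<integral>i. max (c - i * d) 0 \<partial>M) = c - d * Ei M"
proof -
  have "(\<integral>i. max (c - i * d) 0 \<partial>M) = (\<integral>i. c - d * i \<partial>M)"
    using nonneg by (intro integral_cong_AE) (auto elim!: AE_mp simp: mult.commute)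
  also have "\<dots> = c - d * Ei M"
    using int prob_space by (simp add: Ei_def)
  finally show ?thesis .
qed

lemma (in real_distribution) integral_max_affine_of_AE_nonpos:
  assumes "AE i in M. c \<le> i * d"
  shows "(\<integral>i. max (c - i * d) 0 \<partial>M) = 0"
proof -
  have "(\<integral>i. max (c - i * d) 0 \<partial>M) = (\<integral>i. 0 \<partial>M)"
    using assms by (intro integral_cong_AE) (auto elim!: AE_mp)
  then show ?thesis by simp
qed

lemma (in real_distribution) integral_max_affine_pos_slope:
  assumes int: "integrable M (\<lambda>i. i)" and "d > 0"
  shows "(\<integral>i. max (c - i * d) 0 \<partial>M) = cdf M (c / d) * (c - d * Ei_le M (c / d))"
proof -
  have "max (c - i * d) 0 = indicator {..c / d} i * (c - i * d)" for i
    using \<open>d > 0\<close> by (simp add: indicator_def pos_le_divide_eq)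
  then show ?thesis
    by (simp add: integral_indicator_affine[OF int] Ei_le_def cdf_def2)
qed

lemma (in real_distribution) integral_max_affine_neg_slope:
  assumes int: "integrable M (\<lambda>i. i)" and "d < 0" and "isCont (cdf M) (c / d)"
  shows "(\<integral>i. max (c - i * d) 0 \<partial>M) = (1 - cdf M (c / d)) * (c - d * Ei_ge M (c / d))"
proof -
  have "max (c - i * d) 0 = indicator {c / d..} i * (c - i * d)" for i
    using \<open>d < 0\<close> by (simp add: indicator_def neg_divide_le_eq)
  then show ?thesis
    by (simp add: integral_indicator_affine[OF int] Ei_ge_def measure_atLeast_cdf assms(3))
qed

theorem proposition3:
  fixes M :: "real measure" and qH q1 q2 qL R :: real
  assumes distr: "real_distribution M"
    and F_cont: "continuous_on UNIV (cdf M)"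
    and F_lo: "cdf M (-1/2) = 0"
    and F_hi: "cdf M (1/2) = 1"
    and F_full: "\<And>x y. -1/2 \<le> x \<Longrightarrow> x < y \<Longrightarrow> y \<le> 1/2 \<Longrightarrow> cdf M x < cdf M y"
    and q_pos: "qH > 0" "q1 > 0" "q2 > 0" "qL > 0"
    and q_sum: "qH + q1 + q2 + qL = 1"
    and R: "0 < R" "R < 1"
  defines "F \<equiv> cdf M"
    and "pB \<equiv> piB (cdf M) qH q1 q2 R"
    and "DOB \<equiv> DeltaO (cdf M) qH q1 q2 qL R Buy"
    and "DSB \<equiv> DeltaS (cdf M) qH q1 q2 qL R Buy"
    and "DOD \<equiv> DeltaO (cdf M) qH q1 q2 qL R DontBuy"
    and "DSD \<equiv> DeltaS (cdf M) qH q1 q2 qL R DontBuy"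
    and "it \<equiv> DeltaO (cdf M) qH q1 q2 qL R Buy / DeltaS (cdf M) qH q1 q2 qL R Buy"
  shows "(\<bar>DSB\<bar> \<le> 2 * DOB \<longrightarrow> Vrec M qH q1 q2 qL R = pB * (DOB - DSB * Ei M))
       \<and> (DSB < - 2 * DOB \<longrightarrow> Vrec M qH q1 q2 qL R =
            (1 - pB) * F it * (DOD - DSD * Ei_le M it)
            + pB * (1 - F it) * (DOB - DSB * Ei_ge M it))
       \<and> (DSB > 2 * DOB \<longrightarrow> Vrec M qH q1 q2 qL R =
            pB * F it * (DOB - DSB * Ei_le M it)
            + (1 - pB) * (1 - F it) * (DOD - DSD * Ei_ge M it))"
proof -
  interpret real_distribution M by (rule distr)
  have F_unit: "\<And>x. 0 \<le> cdf M x" "\<And>x. cdf M x \<le> 1"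
    by (simp_all add: cdf_nonneg cdf_bounded_prob)
  have pB: "0 < pB" "pB < 1"
    unfolding pB_def using piB_pos[OF F_unit] piB_less_1[OF F_unit] q_pos q_sum by auto
  define k where "k = pB / (1 - pB)"
  have "k > 0" using pB by (simp add: k_def)
  have DontBuy: "DOD = - k * DOB" "DSD = - k * DSB"
    using DeltaO_average_zero[of "cdf M" qH q1 q2 R qL] DeltaS_average_zero[of "cdf M" qH q1 q2 R qL] pB
    unfolding k_def pB_def DOB_def DSB_def DOD_def DSD_def piD_def by (auto simp: field_simps)
  have V: "Vrec M qH q1 q2 qL R = pB * (\<integral>i. max (DOB - i * DSB) 0 \<partial>M)
      + (1 - pB) * (\<integral>i. max (DOD - i * DSD) 0 \<partial>M)"
    unfolding Vrec_def Urec_minus_U0 piD_def pB_def DOB_def DSB_def DOD_def DSD_def ..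
  have int: "integrable M (\<lambda>i. i)"
    using integrable_ident_of_cdf[OF F_lo F_hi] .
  have "DOB \<ge> 0"
    unfolding DOB_def using DeltaO_Buy_nonneg[OF F_unit q_pos q_sum] .
  have it: "it = DOB / DSB" "it = DOD / DSD" "isCont (cdf M) it"
    using \<open>k > 0\<close> F_cont
    by (simp_all add: it_def DOB_def DSB_def DontBuy continuous_on_eq_continuous_at)
  show ?thesis
  proof (intro conjI impI)
    assume "\<bar>DSB\<bar> \<le> 2 * DOB"
    then have B: "AE i in M. i * DSB \<le> DOB"
      using AE_Ioc_of_cdf[OF F_lo F_hi] by (auto elim!: AE_mp intro!: mult_le_if_abs_le_half)
    then have "AE i in M. DOD \<le> i * DSD"
      using \<open>k > 0\<close> by (auto elim!: AE_mp simp: DontBuy)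
    with B show "Vrec M qH q1 q2 qL R = pB * (DOB - DSB * Ei M)"
      by (simp add: V integral_max_affine_of_AE_nonneg[OF int] integral_max_affine_of_AE_nonpos)
  next
    assume "DSB < - 2 * DOB"
    then have "DSB < 0" "DSD > 0"
      using \<open>DOB \<ge> 0\<close> \<open>k > 0\<close> by (simp_all add: DontBuy mult_pos_neg)
    then show "Vrec M qH q1 q2 qL R = (1 - pB) * F it * (DOD - DSD * Ei_le M it)
        + pB * (1 - F it) * (DOB - DSB * Ei_ge M it)"
      using it integral_max_affine_neg_slope[OF int] integral_max_affine_pos_slope[OF int]
      by (simp add: V F_def)
  next
    assume "DSB > 2 * DOB"
    then have "DSB > 0" "DSD < 0"
      using \<open>DOB \<ge> 0\<close> \<open>k > 0\<close> by (simp_all add: DontBuy mult_neg_pos)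
    then show "Vrec M qH q1 q2 qL R = pB * F it * (DOB - DSB * Ei_le M it)
        + (1 - pB) * (1 - F it) * (DOD - DSD * Ei_ge M it)"
      using it integral_max_affine_neg_slope[OF int] integral_max_affine_pos_slope[OF int]
      by (simp add: V F_def)
  qed
qed

end
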